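(* Let $\mathcal{X}\subseteq\mathbb{R}^2$ be compact. Then $\mathcal{X}$ is standard comonotone if and only if, for all $v\in\{e,-e\}$ and all $\pi\in\Pi_2=\{(1,2),(2,1)\}$, the problem $\max\{v^\top x: x\in\mathcal{X}\}$ admits an optimal solution $\bar x\in\mathcal{Z}(\pi)$.
   Context: $e=(1,1)^\top$. $\Pi_n$ is the set of permutations of $[n]$; for $\pi\in\Pi_n$, $\mathcal{Z}(\pi)=\{x\in\mathbb{R}^n: x_{\pi(1)}\ge\cdots\ge x_{\pi(n)}\}$. A set $\mathcal{X}\subseteq\mathbb{R}^n$ is standard comonotone if for every $\pi\in\Pi_n$ and every $v\in\mathcal{Z}(\pi)$, whenever $\max_{x\in\mathcal{X}}v^\top x$ attains its optimum, it has an optimal solution in $\mathcal{Z}(\pi)$. *)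

theory Defs
  imports "HOL-Analysis.Analysis"
begin

text \<open>Vectors in R^n are real^'n with a finite, linearly ordered index type 'n
  (the order playing the role of 1 < 2 < ... < n).\<close>

definition Zcone :: "('n::{finite,linorder} \<Rightarrow> 'n::{finite,linorder}) \<Rightarrow> (real^'n::{finite,linorder}) set" where
  "Zcone \<pi> = {x. \<forall>i j. i \<le> j \<longrightarrow> x $ (\<pi> j) \<le> x $ (\<pi> i)}"

definition is_max_sol :: "(real^'n::finite) set \<Rightarrow> real^'n::finite \<Rightarrow> real^'n::finite \<Rightarrow> bool" where
  "is_max_sol X v x \<longleftrightarrow> x \<in> X \<and> (\<forall>y\<in>X. v \<bullet> y \<le> v \<bullet> x)"

definition standard_comonotone :: "(real^'n::{finite,linorder}) set \<Rightarrow> bool" where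
  "standard_comonotone X \<longleftrightarrow>
     (\<forall>\<pi>. \<pi> permutes (UNIV :: 'n set) \<longrightarrow>
        (\<forall>v \<in> Zcone \<pi>. (\<exists>x. is_max_sol X v x) \<longrightarrow> (\<exists>x \<in> Zcone \<pi>. is_max_sol X v x)))"

end

theory Submission
  imports Defs
begin

text \<open>Split the objective along the diagonal direction \<open>e\<close> and the anti-diagonal:
  \<open>2 v\<bullet>y = (e\<bullet>v)(e\<bullet>y) + (v\<^sub>a - v\<^sub>b)(y\<^sub>a - y\<^sub>b)\<close>.  If \<open>v \<in> Z(\<pi>)\<close> has a maximiser
  \<open>x \<notin> Z(\<pi>)\<close>, take a maximiser \<open>p \<in> Z(\<pi>)\<close> of \<open>\<plusminus>e\<close>, the sign being that of \<open>e\<bullet>v\<close>.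
  Then \<open>p\<close> is at least as good as \<open>x\<close> in the first term by its optimality, and in the
  second term because \<open>v\<close> and \<open>p\<close> are ordered like \<open>\<pi>\<close> while \<open>x\<close> is not; so \<open>p\<close> is
  again a maximiser of \<open>v\<close>.\<close>

lemma one_in_Zcone: "1 \<in> Zcone \<pi>" and minus_one_in_Zcone: "-1 \<in> Zcone \<pi>"
  by (simp_all add: Zcone_def)

lemma is_max_sol_exists:
  assumes "compact X" and "X \<noteq> {}"
  shows "\<exists>x. is_max_sol X v x"
proof -
  have "continuous_on X (\<lambda>y. v \<bullet> y)"
    by (intro continuous_intros)
  then obtain x where "x \<in> X" "\<forall>y\<in>X. v \<bullet> y \<le> v \<bullet> x"
    using continuous_attains_sup[OF assms] by blast
  then show ?thesis
    unfolding is_max_sol_def by blast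
qed

lemma is_max_sol_if_ge:
  assumes "is_max_sol X v x" and "p \<in> X" and "v \<bullet> x \<le> v \<bullet> p"
  shows "is_max_sol X v p"
  using assms unfolding is_max_sol_def by force

lemma UNIV_2_eq_pair:
  assumes "(a::2) \<noteq> b"
  shows "UNIV = {a, b}"
  using assms exhaust_2[of a] exhaust_2[of b] UNIV_2 by auto

lemma inner_vec_2:
  fixes v y :: "real^2"
  assumes "a \<noteq> b"
  shows "v \<bullet> y = v $ a * y $ a + v $ b * y $ b"
  using assms by (simp add: inner_vec_def UNIV_2_eq_pair[OF assms])

lemma inner_vec_2_diagonal_split:
  fixes v y :: "real^2"
  assumes "a \<noteq> b"
  shows "2 * (v \<bullet> y) = (1 \<bullet> v) * (1 \<bullet> y) + (v $ a - v $ b) * (y $ a - y $ b)"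
  by (simp add: inner_vec_2[OF assms] algebra_simps)

text \<open>In the numeral type \<open>2\<close> the numeral \<open>2\<close> is \<open>0\<close>, so \<open>(2::2) < 1\<close>.\<close>

lemma Zcone_2_iff:
  fixes \<pi> :: "2 \<Rightarrow> 2"
  shows "x \<in> Zcone \<pi> \<longleftrightarrow> x $ \<pi> 1 \<le> x $ \<pi> 2"
proof -
  have le_2: "(2::2) \<le> 1" "\<not> (1::2) \<le> 2"
    by (simp_all add: less_eq_bit0_def bit0.Rep_0 bit0.Rep_1 bit0.Rep_numeral)
  show ?thesis
    unfolding Zcone_def
    using le_2 exhaust_2 by (smt (verit) mem_Collect_eq order_refl)
qed

lemma Zcone_exchange_2:
  fixes v x p :: "real^2"
  assumes \<pi>: "\<pi> permutes UNIV"
    and "v \<in> Zcone \<pi>" and "p \<in> Zcone \<pi>" and "x \<notin> Zcone \<pi>"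
    and diagonal: "(1 \<bullet> v) * (1 \<bullet> x) \<le> (1 \<bullet> v) * (1 \<bullet> p)"
  shows "v \<bullet> x \<le> v \<bullet> p"
proof -
  let ?a = "\<pi> 2" and ?b = "\<pi> 1"
  have ab: "?a \<noteq> ?b"
    using permutes_inj[OF \<pi>] by (simp add: inj_eq)
  have "(v $ ?a - v $ ?b) * (x $ ?a - x $ ?b) \<le> 0"
    using assms(2,4) by (simp add: Zcone_2_iff mult_nonneg_nonpos)
  also have "0 \<le> (v $ ?a - v $ ?b) * (p $ ?a - p $ ?b)"
    using assms(2,3) by (simp add: Zcone_2_iff)
  finally show ?thesis
    using diagonal inner_vec_2_diagonal_split[OF ab, of v x]
      inner_vec_2_diagonal_split[OF ab, of v p] by linarith
qed

lemma diagonal_sign_witness: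
  fixes v :: "real^'n::finite"
  obtains w where "w \<in> {1, -1}" and "\<And>y. (1 \<bullet> v) * (1 \<bullet> y) = \<bar>1 \<bullet> v\<bar> * (w \<bullet> y)"
proof (cases "0 \<le> 1 \<bullet> v")
  case True
  then show ?thesis using that[of 1] by simp
next
  case False
  then show ?thesis using that[of "-1"] by simp
qed

theorem proposition1:
  fixes X :: "(real^2) set"
  assumes "compact X" and "X \<noteq> {}"
  shows "standard_comonotone X \<longleftrightarrow>
    (\<forall>v \<in> {1, -1}. \<forall>\<pi>. \<pi> permutes (UNIV :: 2 set) \<longrightarrow>
        (\<exists>x \<in> Zcone \<pi>. is_max_sol X v x))"
proof
  assume "standard_comonotone X"
  then show "\<forall>v \<in> {1, -1}. \<forall>\<pi>. \<pi> permutes UNIV \<longrightarrow> (\<exists>x \<in> Zcone \<pi>. is_max_sol X v x)"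
    using is_max_sol_exists[OF assms] one_in_Zcone minus_one_in_Zcone
    unfolding standard_comonotone_def by blast
next
  assume diagonal_max: "\<forall>v \<in> {1, -1}. \<forall>\<pi>. \<pi> permutes UNIV \<longrightarrow> (\<exists>x \<in> Zcone \<pi>. is_max_sol X v x)"
  show "standard_comonotone X"
    unfolding standard_comonotone_def
  proof (intro allI impI ballI)
    fix \<pi> :: "2 \<Rightarrow> 2" and v :: "real^2"
    assume \<pi>: "\<pi> permutes UNIV" and v: "v \<in> Zcone \<pi>" and "\<exists>x. is_max_sol X v x"
    then obtain x where x: "is_max_sol X v x" by blast
    obtain w :: "real^2"
      where "w \<in> {1, -1}" and w: "\<And>y. (1 \<bullet> v) * (1 \<bullet> y) = \<bar>1 \<bullet> v\<bar> * (w \<bullet> y)"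
      using diagonal_sign_witness[of v] by metis
    then obtain p where p: "p \<in> Zcone \<pi>" "is_max_sol X w p"
      using diagonal_max \<pi> by blast
    have "(1 \<bullet> v) * (1 \<bullet> x) \<le> (1 \<bullet> v) * (1 \<bullet> p)"
      using p x by (simp add: w is_max_sol_def mult_left_mono)
    then have "x \<notin> Zcone \<pi> \<Longrightarrow> is_max_sol X v p"
      using Zcone_exchange_2[OF \<pi> v p(1)] is_max_sol_if_ge[OF x] p(2)
      by (simp add: is_max_sol_def)
    then show "\<exists>x \<in> Zcone \<pi>. is_max_sol X v x"
      using x p(1) by blast
  qed
qed

end
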